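(* If $f\in\mathcal G_0\setminus\{i\}$, then there exist $g_1,g_2\in\mathcal G_0$ such that $$\int_{-1}^1 f(g_1^{-1}(t))\,dt>0>\int_{-1}^1 f(g_2^{-1}(t))\,dt,$$ i.e. $Q(f,g_1)>0>Q(f,g_2)$, so $g_1\to f\to g_2$ in $\Gamma_{\mathcal G}$. If moreover $f\in\mathcal G_0\setminus\mathcal G_{00}$, then $g_1,g_2$ can be chosen in $\mathcal G_{00}$.
   Context: Let $\mathcal G$ be the group (under composition) of strictly increasing continuous maps $f:[-1,1]\to[-1,1]$ with $f(\pm1)=\pm1$; $i\in\mathcal G$ is the identity $i(t)=t$. Let $\mathcal G_0=\{f\in\mathcal G:\int_{-1}^1 f(t)\,dt=0\}$ and $\mathcal G_{00}=\{f\in\mathcal G: f(-t)=-f(t)\ \forall t\}$ (the odd elements; $\mathcal G_{00}\subset\mathcal G_0$). For $f,g\in\mathcal G$ put $Q(f,g)=\int_{-1}^1 f(g^{-1}(t))\,dt$. The digraph $\Gamma_{\mathcal G}$ on $\mathcal G$ has an edge $g\to f$ iff $Q(f,g)>0$. *)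

theory Defs
  imports "HOL-Analysis.Analysis"
begin

text \<open>Elements of the group G are represented by functions real \<Rightarrow> real; only their
  restriction to [-1,1] matters.\<close>

definition G :: "(real \<Rightarrow> real) set" where
  "G = {f. continuous_on {-1..1} f \<and> strict_mono_on {-1..1} f
          \<and> f ` {-1..1} \<subseteq> {-1..1} \<and> f (-1) = -1 \<and> f 1 = 1}"

definition G0 :: "(real \<Rightarrow> real) set" where
  "G0 = {f \<in> G. integral {-1..1} f = 0}"

definition G00 :: "(real \<Rightarrow> real) set" where
  "G00 = {f \<in> G. \<forall>t\<in>{-1..1}. f (-t) = - f t}"

definition Q :: "(real \<Rightarrow> real) \<Rightarrow> (real \<Rightarrow> real) \<Rightarrow> real" where
  "Q f g = integral {-1..1} (\<lambda>t. f (inv_into {-1..1} g t))"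

text \<open>Equality of group elements = equality on [-1,1].\<close>
definition is_id :: "(real \<Rightarrow> real) \<Rightarrow> bool" where
  "is_id f \<longleftrightarrow> (\<forall>t\<in>{-1..1}. f t = t)"

end

theory Submission
  imports Defs
begin

text \<open>
  The test elements are piecewise-linear maps g with two interior knots (p, P) and (q, R).
  Substituting t = g(s) turns Q(f, g) into the integral of f g', a combination of the values
  at p and q of the primitive F(u) = integral of f over [-1, u], weighted by the slopes of g.
  Moving the knot values to P = p + \<epsilon>(1 - p), R = q - \<epsilon>(1 + q) keeps the integral of g zero
  and makes Q(f, g) = 2\<epsilon>/(q - p) D(p, q) with D(p, q) = F(p)(1 + q)/(1 + p) - F(q)(1 - p)/(1 - q),
  so Q takes both signs as soon as D(p, q) \<noteq> 0. If D vanished for all p < q, then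
  F(x) = F(0)(1 - x^2), and differentiating forces f = i. For p = -q the perturbed g is odd,
  and D(-q, q) is a nonzero multiple of F(-q) - F(q), which vanishes for all q only if f is odd.
\<close>

definition line_through :: "real \<Rightarrow> real \<Rightarrow> real \<Rightarrow> real \<Rightarrow> real \<Rightarrow> real" where
  "line_through x0 y0 x1 y1 x = y0 + (x - x0) * ((y1 - y0) / (x1 - x0))"

lemma line_through_left [simp]: "line_through x0 y0 x1 y1 x0 = y0"
  by (simp add: line_through_def)

lemma line_through_right [simp]: "x0 \<noteq> x1 \<Longrightarrow> line_through x0 y0 x1 y1 x1 = y1"
  by (simp add: line_through_def)

lemma line_through_less_iff:
  assumes "x0 < x1" "y0 < y1"
  shows "line_through x0 y0 x1 y1 x < line_through x0 y0 x1 y1 x' \<longleftrightarrow> x < x'"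
  using assms by (simp add: line_through_def divide_less_cancel mult_less_cancel_right)

lemma line_through_le_iff:
  assumes "x0 < x1" "y0 < y1"
  shows "line_through x0 y0 x1 y1 x \<le> line_through x0 y0 x1 y1 x' \<longleftrightarrow> x \<le> x'"
  using assms by (simp add: line_through_def divide_le_cancel mult_le_cancel_right)

lemma line_through_mem_interval:
  assumes "x0 < x1" "y0 < y1" "x \<in> {x0..x1}"
  shows "line_through x0 y0 x1 y1 x \<in> {y0..y1}"
  using assms line_through_le_iff[OF assms(1,2), of x0 x] line_through_le_iff[OF assms(1,2), of x x1]
  by auto

lemma line_through_inverse:
  assumes "x0 \<noteq> x1" "y0 \<noteq> y1"
  shows "line_through y0 x0 y1 x1 (line_through x0 y0 x1 y1 x) = x"
proof -
  have "(x - x0) * ((y1 - y0) / (x1 - x0)) * ((x1 - x0) / (y1 - y0)) = x - x0"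
    using assms by simp
  then show ?thesis
    by (simp add: line_through_def)
qed

lemma line_through_has_real_derivative:
  "(line_through x0 y0 x1 y1 has_real_derivative (y1 - y0) / (x1 - x0)) (at x within S)"
proof -
  have "((\<lambda>x. y0 + (x - x0) * c) has_real_derivative c) (at x within S)" for c
    by (auto intro!: derivative_eq_intros)
  then show ?thesis
    unfolding line_through_def .
qed

lemma line_through_has_integral:
  assumes "x0 < x1"
  shows "(line_through x0 y0 x1 y1 has_integral (x1 - x0) * (y0 + y1) / 2) {x0..x1}"
proof -
  define k where "k = (y1 - y0) / (x1 - x0)"
  define P where "P x = y0 * x + k * (x - x0)\<^sup>2 / 2" for x
  have "(P has_real_derivative y0 + k * (x - x0)) (at x within {x0..x1})" for x
    unfolding P_def by (auto intro!: derivative_eq_intros)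
  then have "(P has_vector_derivative line_through x0 y0 x1 y1 x) (at x within {x0..x1})" for x
    by (simp add: line_through_def k_def has_real_derivative_iff_has_vector_derivative mult.commute)
  then have "(line_through x0 y0 x1 y1 has_integral P x1 - P x0) {x0..x1}"
    using assms by (intro fundamental_theorem_of_calculus) auto
  moreover have "k * (x1 - x0)\<^sup>2 = (y1 - y0) * (x1 - x0)"
    using assms by (simp add: k_def power2_eq_square)
  then have "P x1 - P x0 = (x1 - x0) * (y0 + y1) / 2"
    by (simp add: P_def algebra_simps)
  ultimately show ?thesis by simp
qed

definition primitive :: "(real \<Rightarrow> real) \<Rightarrow> real \<Rightarrow> real" where
  "primitive f u = integral {-1..u} f"

lemma primitive_minus_one [simp]: "primitive f (-1) = 0"
  by (simp add: primitive_def)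

lemma primitive_has_real_derivative:
  assumes "continuous_on {-1..1} f" "x \<in> {-1..1}"
  shows "(primitive f has_real_derivative f x) (at x within {-1..1})"
  unfolding primitive_def by (rule integral_has_real_derivative[OF assms])

lemma has_integral_comp_line_through:
  assumes f: "continuous_on {-1..1} f"
    and "x0 < x1" "y0 < y1" "-1 \<le> y0" "y1 \<le> 1"
  shows "((\<lambda>t. f (line_through x0 y0 x1 y1 t)) has_integral
           (x1 - x0) / (y1 - y0) * (primitive f y1 - primitive f y0)) {x0..x1}"
proof -
  let ?L = "line_through x0 y0 x1 y1"
  define k where "k = (y1 - y0) / (x1 - x0)"
  have "k > 0"
    using assms by (simp add: k_def)
  have image: "?L ` {x0..x1} \<subseteq> {-1..1}"
    using assms line_through_mem_interval[of x0 x1 y0 y1] by fastforce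
  have "((\<lambda>t. primitive f (?L t) / k) has_vector_derivative f (?L t)) (at t within {x0..x1})"
    if t: "t \<in> {x0..x1}" for t
  proof -
    have "(primitive f has_real_derivative f (?L t)) (at (?L t) within ?L ` {x0..x1})"
      using primitive_has_real_derivative[OF f] image t by (blast intro: DERIV_subset)
    from DERIV_image_chain[OF this line_through_has_real_derivative]
    have "((\<lambda>t. primitive f (?L t)) has_real_derivative f (?L t) * k) (at t within {x0..x1})"
      by (simp add: k_def o_def)
    from DERIV_cdivide[OF this, of k] show ?thesis
      using \<open>k > 0\<close> by (simp add: has_real_derivative_iff_has_vector_derivative)
  qed
  then have "((\<lambda>t. f (?L t)) has_integral primitive f (?L x1) / k - primitive f (?L x0) / k)
      {x0..x1}"
    using assms by (intro fundamental_theorem_of_calculus) auto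
  moreover have "primitive f (?L x1) / k - primitive f (?L x0) / k
      = (x1 - x0) / (y1 - y0) * (primitive f y1 - primitive f y0)"
    using assms by (simp add: k_def flip: diff_divide_distrib) (simp add: algebra_simps)
  ultimately show ?thesis
    by simp
qed

definition increasing_knots :: "real \<Rightarrow> real \<Rightarrow> real \<Rightarrow> real \<Rightarrow> bool" where
  "increasing_knots a1 a2 b1 b2 \<longleftrightarrow> -1 < a1 \<and> a1 < a2 \<and> a2 < 1 \<and> -1 < b1 \<and> b1 < b2 \<and> b2 < 1"

definition pwl :: "real \<Rightarrow> real \<Rightarrow> real \<Rightarrow> real \<Rightarrow> real \<Rightarrow> real" where
  "pwl a1 a2 b1 b2 x =
     (if x \<le> a1 then line_through (-1) (-1) a1 b1 x
      else if x \<le> a2 then line_through a1 b1 a2 b2 x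
      else line_through a2 b2 1 1 x)"

lemma increasing_knots_swap: "increasing_knots a1 a2 b1 b2 \<Longrightarrow> increasing_knots b1 b2 a1 a2"
  by (auto simp: increasing_knots_def)

lemma pwl_eq_clamped_sum:
  assumes "increasing_knots a1 a2 b1 b2"
  shows "pwl a1 a2 b1 b2 x =
           line_through (-1) (-1) a1 b1 (min x a1)
         + (line_through a1 b1 a2 b2 (max a1 (min x a2)) - b1)
         + (line_through a2 b2 1 1 (max x a2) - b2)"
  using assms by (auto simp: pwl_def increasing_knots_def min_def max_def)

lemma continuous_on_pwl:
  assumes "increasing_knots a1 a2 b1 b2"
  shows "continuous_on S (pwl a1 a2 b1 b2)"
  using assms unfolding pwl_eq_clamped_sum[OF assms, abs_def] line_through_def increasing_knots_def
  by (intro continuous_intros) auto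

lemma pwl_strict_mono:
  assumes knots: "increasing_knots a1 a2 b1 b2" and "x < y"
  shows "pwl a1 a2 b1 b2 x < pwl a1 a2 b1 b2 y"
proof -
  have o: "-1 < a1" "a1 < a2" "a2 < 1" "-1 < b1" "b1 < b2" "b2 < 1"
    using knots by (auto simp: increasing_knots_def)
  let ?L1 = "line_through (-1) (-1) a1 b1" and ?L2 = "line_through a1 b1 a2 b2"
    and ?L3 = "line_through a2 b2 1 1"
  have le1: "?L1 (min x a1) \<le> ?L1 (min y a1)"
    and le2: "?L2 (max a1 (min x a2)) \<le> ?L2 (max a1 (min y a2))"
    and le3: "?L3 (max x a2) \<le> ?L3 (max y a2)"
    using o \<open>x < y\<close> by (simp_all add: line_through_le_iff)
  have "?L1 (min x a1) < ?L1 (min y a1) \<or> ?L2 (max a1 (min x a2)) < ?L2 (max a1 (min y a2))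
      \<or> ?L3 (max x a2) < ?L3 (max y a2)"
    using o \<open>x < y\<close> by (simp add: line_through_less_iff) linarith
  then show ?thesis
    using le1 le2 le3 unfolding pwl_eq_clamped_sum[OF knots] by (elim disjE) linarith+
qed

lemma pwl_minus_one [simp]: "increasing_knots a1 a2 b1 b2 \<Longrightarrow> pwl a1 a2 b1 b2 (-1) = -1"
  by (auto simp: pwl_def increasing_knots_def)

lemma pwl_one [simp]: "increasing_knots a1 a2 b1 b2 \<Longrightarrow> pwl a1 a2 b1 b2 1 = 1"
  by (auto simp: pwl_def increasing_knots_def)

lemma pwl_mem_interval:
  assumes "increasing_knots a1 a2 b1 b2" "x \<in> {-1..1}"
  shows "pwl a1 a2 b1 b2 x \<in> {-1..1}"
  using pwl_strict_mono[OF assms(1), of "-1" x] pwl_strict_mono[OF assms(1), of x 1] assms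
  by (cases "x = -1"; cases "x = 1") auto

lemma pwl_in_G:
  assumes "increasing_knots a1 a2 b1 b2"
  shows "pwl a1 a2 b1 b2 \<in> G"
  unfolding G_def
  using continuous_on_pwl pwl_mem_interval pwl_strict_mono assms
  by (auto intro!: strict_mono_onI)

lemma pwl_inverse:
  assumes "increasing_knots a1 a2 b1 b2"
  shows "pwl a1 a2 b1 b2 (pwl b1 b2 a1 a2 t) = t"
proof -
  have o: "-1 < a1" "a1 < a2" "a2 < 1" "-1 < b1" "b1 < b2" "b2 < 1"
    using assms by (auto simp: increasing_knots_def)
  consider "t \<le> b1" | "b1 < t" "t \<le> b2" | "b2 < t"
    by linarith
  then show ?thesis
  proof cases
    case 1
    then have "line_through (-1) (-1) b1 a1 t \<le> a1"
      using line_through_le_iff[of "-1" b1 "-1" a1 t b1] o by simp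
    then show ?thesis
      using 1 o line_through_inverse[of "-1" b1 "-1" a1] by (simp add: pwl_def)
  next
    case 2
    then have "a1 < line_through b1 a1 b2 a2 t" "line_through b1 a1 b2 a2 t \<le> a2"
      using line_through_less_iff[of b1 b2 a1 a2 b1 t] line_through_le_iff[of b1 b2 a1 a2 t b2] o
      by simp_all
    then show ?thesis
      using 2 o line_through_inverse[of b1 b2 a1 a2] by (simp add: pwl_def)
  next
    case 3
    then have "a2 < line_through b2 a2 1 1 t"
      using line_through_less_iff[of b2 1 a2 1 b2 t] o by simp
    then show ?thesis
      using 3 o line_through_inverse[of b2 1 a2 1] by (simp add: pwl_def)
  qed
qed

lemma pwl_odd:
  assumes "increasing_knots (-a) a (-b) b"
  shows "pwl (-a) a (-b) b (-x) = - pwl (-a) a (-b) b x"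
  using assms by (cases "x = -a") (auto simp: pwl_def increasing_knots_def line_through_def field_simps)

lemma has_integral_combine3:
  fixes f :: "real \<Rightarrow> 'b::banach"
  assumes "a \<le> c" "c \<le> d" "d \<le> b"
    and "(f has_integral i) {a..c}" "(f has_integral j) {c..d}" "(f has_integral k) {d..b}"
  shows "(f has_integral (i + j + k)) {a..b}"
  using assms by (meson has_integral_combine order_trans)

lemma pwl_has_integral:
  assumes "increasing_knots a1 a2 b1 b2"
  shows "(pwl a1 a2 b1 b2 has_integral
           (a1 + 1) * (b1 - 1) / 2 + (a2 - a1) * (b1 + b2) / 2 + (1 - a2) * (b2 + 1) / 2) {-1..1}"
proof -
  have o: "-1 < a1" "a1 < a2" "a2 < 1"
    using assms by (auto simp: increasing_knots_def)
  have "(pwl a1 a2 b1 b2 has_integral (a1 + 1) * (b1 - 1) / 2) {-1..a1}"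
    by (intro has_integral_eq_rhs[OF has_integral_eq[OF _ line_through_has_integral[OF o(1)]]])
      (auto simp: pwl_def)
  moreover have "(pwl a1 a2 b1 b2 has_integral (a2 - a1) * (b1 + b2) / 2) {a1..a2}"
    by (rule has_integral_eq[OF _ line_through_has_integral[OF o(2), of b1 b2]])
      (use o in \<open>auto simp: pwl_def line_through_def\<close>)
  moreover have "(pwl a1 a2 b1 b2 has_integral (1 - a2) * (b2 + 1) / 2) {a2..1}"
    by (rule has_integral_eq[OF _ line_through_has_integral[OF o(3), of b2 1]])
      (use o in \<open>auto simp: pwl_def line_through_def\<close>)
  ultimately show ?thesis
    using o by (intro has_integral_combine3) auto
qed

lemma Q_pwl:
  assumes knots: "increasing_knots a1 a2 b1 b2" and f: "continuous_on {-1..1} f"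
  shows "Q f (pwl a1 a2 b1 b2) =
           (b1 + 1) / (a1 + 1) * primitive f a1
         + (b2 - b1) / (a2 - a1) * (primitive f a2 - primitive f a1)
         + (1 - b2) / (1 - a2) * (primitive f 1 - primitive f a2)"
proof -
  have o: "-1 < a1" "a1 < a2" "a2 < 1" "-1 < b1" "b1 < b2" "b2 < 1"
    using knots by (auto simp: increasing_knots_def)
  have "inj_on (pwl a1 a2 b1 b2) {-1..1}"
    using pwl_in_G[OF knots] by (auto simp: G_def intro: strict_mono_on_imp_inj_on)
  then have "inv_into {-1..1} (pwl a1 a2 b1 b2) t = pwl b1 b2 a1 a2 t" if "t \<in> {-1..1}" for t
    using pwl_mem_interval[OF increasing_knots_swap[OF knots] that] pwl_inverse[OF knots]
    by (auto intro: inv_into_f_eq)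
  then have "Q f (pwl a1 a2 b1 b2) = integral {-1..1} (\<lambda>t. f (pwl b1 b2 a1 a2 t))"
    unfolding Q_def by (intro integral_cong) simp
  also have "\<dots> = (b1 + 1) / (a1 + 1) * primitive f a1
         + (b2 - b1) / (a2 - a1) * (primitive f a2 - primitive f a1)
         + (1 - b2) / (1 - a2) * (primitive f 1 - primitive f a2)"
  proof (rule integral_unique, rule has_integral_combine3)
    show "((\<lambda>t. f (pwl b1 b2 a1 a2 t)) has_integral (b1 + 1) / (a1 + 1) * primitive f a1) {-1..b1}"
      by (intro has_integral_eq_rhs[OF has_integral_eq[OF _ has_integral_comp_line_through[OF f o(4) o(1)]]])
        (use o in \<open>auto simp: pwl_def\<close>)
    show "((\<lambda>t. f (pwl b1 b2 a1 a2 t)) has_integral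
        (b2 - b1) / (a2 - a1) * (primitive f a2 - primitive f a1)) {b1..b2}"
      by (rule has_integral_eq[OF _ has_integral_comp_line_through[OF f o(5) o(2)]])
        (use o in \<open>auto simp: pwl_def\<close>)
    show "((\<lambda>t. f (pwl b1 b2 a1 a2 t)) has_integral
        (1 - b2) / (1 - a2) * (primitive f 1 - primitive f a2)) {b2..1}"
      by (rule has_integral_eq[OF _ has_integral_comp_line_through[OF f o(6) o(3)]])
        (use o in \<open>auto simp: pwl_def\<close>)
  qed (use o in auto)
  finally show ?thesis .
qed

lemma G0_continuous_on: "f \<in> G0 \<Longrightarrow> continuous_on {-1..1} f"
  by (simp add: G0_def G_def)

lemma G0_primitive_one: "f \<in> G0 \<Longrightarrow> primitive f 1 = 0"
  by (simp add: G0_def primitive_def)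

definition tilt :: "real \<Rightarrow> real \<Rightarrow> real \<Rightarrow> real \<Rightarrow> real" where
  "tilt p q \<epsilon> = pwl p q (p + \<epsilon> * (1 - p)) (q - \<epsilon> * (1 + q))"

definition tilt_radius :: "real \<Rightarrow> real \<Rightarrow> real" where
  "tilt_radius p q = min (1 + p) (min (1 - q) (q - p)) / 8"

definition Q_rate :: "(real \<Rightarrow> real) \<Rightarrow> real \<Rightarrow> real \<Rightarrow> real" where
  "Q_rate f p q = primitive f p * (1 + q) / (1 + p) - primitive f q * (1 - p) / (1 - q)"

lemma tilt_knots:
  assumes "-1 < p" "p < q" "q < 1" "\<bar>\<epsilon>\<bar> \<le> tilt_radius p q"
  shows "increasing_knots p q (p + \<epsilon> * (1 - p)) (q - \<epsilon> * (1 + q))"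
proof -
  have small: "\<bar>\<epsilon>\<bar> * 8 \<le> 1 + p" "\<bar>\<epsilon>\<bar> * 8 \<le> 1 - q" "\<bar>\<epsilon>\<bar> * 8 \<le> q - p"
    using assms(4) by (auto simp: tilt_radius_def)
  have "\<bar>\<epsilon> * (1 - p)\<bar> \<le> \<bar>\<epsilon>\<bar> * 2" "\<bar>\<epsilon> * (1 + q)\<bar> \<le> \<bar>\<epsilon>\<bar> * 2"
    "\<bar>\<epsilon> * (2 + q - p)\<bar> \<le> \<bar>\<epsilon>\<bar> * 4"
    using assms by (simp_all add: abs_mult mult_left_mono)
  moreover have "q - \<epsilon> * (1 + q) - (p + \<epsilon> * (1 - p)) = q - p - \<epsilon> * (2 + q - p)"
    by (simp add: algebra_simps)
  ultimately show ?thesis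
    using assms small unfolding increasing_knots_def by (auto simp: abs_le_iff)
qed

lemma tilt_in_G0:
  assumes "-1 < p" "p < q" "q < 1" "\<bar>\<epsilon>\<bar> \<le> tilt_radius p q"
  shows "tilt p q \<epsilon> \<in> G0"
proof -
  have "integral {-1..1} (tilt p q \<epsilon>) = 0"
    using integral_unique[OF pwl_has_integral[OF tilt_knots[OF assms]]]
    by (simp add: tilt_def field_simps)
  then show ?thesis
    using pwl_in_G[OF tilt_knots[OF assms]] by (simp add: G0_def tilt_def)
qed

lemma tilt_in_G00:
  assumes "0 < q" "q < 1" "\<bar>\<epsilon>\<bar> \<le> tilt_radius (-q) q"
  shows "tilt (-q) q \<epsilon> \<in> G00"
proof -
  have knots: "increasing_knots (-q) q (- (q - \<epsilon> * (1 + q))) (q - \<epsilon> * (1 + q))"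
    using tilt_knots[of "-q" q \<epsilon>] assms by (simp add: algebra_simps)
  have "tilt (-q) q \<epsilon> = pwl (-q) q (- (q - \<epsilon> * (1 + q))) (q - \<epsilon> * (1 + q))"
    by (simp add: tilt_def algebra_simps)
  then show ?thesis
    using pwl_in_G[OF knots] pwl_odd[OF knots] by (simp add: G00_def)
qed

lemma Q_tilt:
  assumes f: "f \<in> G0" and pq: "-1 < p" "p < q" "q < 1" and "\<bar>\<epsilon>\<bar> \<le> tilt_radius p q"
  shows "Q f (tilt p q \<epsilon>) = 2 * \<epsilon> / (q - p) * Q_rate f p q"
proof -
  have "p + 1 \<noteq> 0" "1 + p \<noteq> 0" "q - p \<noteq> 0" "1 - q \<noteq> 0"
    using pq by auto
  then show ?thesis
    unfolding tilt_def Q_pwl[OF tilt_knots[OF assms(2-)] G0_continuous_on[OF f]]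
    by (simp add: Q_rate_def G0_primitive_one[OF f] divide_simps) (simp add: algebra_simps)
qed

lemma Q_tilt_of_both_signs:
  assumes f: "f \<in> G0" and pq: "-1 < p" "p < q" "q < 1" and "Q_rate f p q \<noteq> 0"
    and tilt_in_S: "\<And>\<epsilon>. \<bar>\<epsilon>\<bar> \<le> tilt_radius p q \<Longrightarrow> tilt p q \<epsilon> \<in> S"
  shows "\<exists>g1\<in>S. \<exists>g2\<in>S. Q f g1 > 0 \<and> 0 > Q f g2"
proof -
  define r where "r = tilt_radius p q"
  define \<sigma> where "\<sigma> = sgn (Q_rate f p q)"
  have "r > 0"
    using pq by (simp add: r_def tilt_radius_def)
  have small: "\<bar>r * \<sigma>\<bar> \<le> tilt_radius p q" "\<bar>- r * \<sigma>\<bar> \<le> tilt_radius p q"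
    using \<open>r > 0\<close> by (simp_all add: r_def \<sigma>_def abs_mult)
  have "2 * (r * \<sigma>) / (q - p) * Q_rate f p q > 0"
    using \<open>r > 0\<close> pq assms(5) by (simp add: \<sigma>_def sgn_if)
  then have "Q f (tilt p q (r * \<sigma>)) > 0" "Q f (tilt p q (- r * \<sigma>)) < 0"
    using Q_tilt[OF f pq small(1)] Q_tilt[OF f pq small(2)] by simp_all
  then show ?thesis
    using tilt_in_S small by blast
qed

lemma has_real_derivative_unique_atLeastAtMost:
  fixes F :: "real \<Rightarrow> real"
  assumes "a < b" "x \<in> {a..b}"
    and "(F has_real_derivative d1) (at x within {a..b})"
    and "(F has_real_derivative d2) (at x within {a..b})"
  shows "d1 = d2"
  using assms by (intro has_field_derivative_unique) (auto simp: trivial_limit_within)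

lemma primitive_eq_quadratic_if_Q_rate_zero:
  assumes f: "f \<in> G0"
    and rate_zero: "\<And>p q. -1 < p \<Longrightarrow> p < q \<Longrightarrow> q < 1 \<Longrightarrow> Q_rate f p q = 0"
    and x: "x \<in> {-1..1}"
  shows "primitive f x = primitive f 0 * (1 - x\<^sup>2)"
proof -
  consider "x = -1" | "x = 1" | "-1 < x" "x < 0" | "x = 0" | "0 < x" "x < 1"
    using x by force
  then show ?thesis
  proof cases
    case 3
    then have "primitive f x / (1 + x) = primitive f 0 * (1 - x)"
      using rate_zero[of x 0] by (simp add: Q_rate_def)
    then show ?thesis
      using 3 by (simp add: field_simps power2_eq_square)
  next
    case 5
    then have "primitive f 0 * (1 + x) = primitive f x / (1 - x)"
      using rate_zero[of 0 x] by (simp add: Q_rate_def)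
    then show ?thesis
      using 5 by (simp add: field_simps power2_eq_square)
  qed (simp_all add: G0_primitive_one[OF f])
qed

lemma exists_Q_rate_nonzero:
  assumes f: "f \<in> G0" and "\<not> is_id f"
  shows "\<exists>p q. -1 < p \<and> p < q \<and> q < 1 \<and> Q_rate f p q \<noteq> 0"
proof (rule ccontr)
  assume no_rate: "\<not> ?thesis"
  define \<kappa> where "\<kappa> = primitive f 0"
  have primitive_eq: "primitive f x = \<kappa> * (1 - x\<^sup>2)" if "x \<in> {-1..1}" for x
    using primitive_eq_quadratic_if_Q_rate_zero[OF f _ that] no_rate
    by (auto simp: \<kappa>_def)
  have "f x = -2 * \<kappa> * x" if x: "x \<in> {-1..1}" for x
  proof (rule has_real_derivative_unique_atLeastAtMost[of "-1" 1 x "primitive f"])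
    show "(primitive f has_real_derivative f x) (at x within {-1..1})"
      using primitive_has_real_derivative[OF G0_continuous_on[OF f] x] .
    have "((\<lambda>x. \<kappa> * (1 - x\<^sup>2)) has_real_derivative -2 * \<kappa> * x) (at x within {-1..1})"
      by (auto intro!: derivative_eq_intros)
    then show "(primitive f has_real_derivative -2 * \<kappa> * x) (at x within {-1..1})"
      by (rule has_field_derivative_transform_within[OF _ zero_less_one x]) (simp add: primitive_eq)
  qed (use x in auto)
  moreover have "f 1 = 1"
    using f by (simp add: G0_def G_def)
  ultimately have "is_id f"
    by (simp add: is_id_def)
  with \<open>\<not> is_id f\<close> show False ..
qed

lemma exists_primitive_asymmetric:
  assumes f: "f \<in> G0" and "f \<notin> G00"
  shows "\<exists>q. 0 < q \<and> q < 1 \<and> primitive f q \<noteq> primitive f (-q)"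
proof (rule ccontr)
  assume "\<not> ?thesis"
  then have symmetric: "primitive f x - primitive f (-x) = 0" if "x \<in> {0..1}" for x
    using that G0_primitive_one[OF f] by (cases "x = 0"; cases "x = 1") force+
  have sum_zero: "f x + f (-x) = 0" if x: "x \<in> {0..1}" for x
  proof (rule has_real_derivative_unique_atLeastAtMost[of 0 1 x "\<lambda>x. primitive f x - primitive f (-x)"])
    have derivative: "(primitive f has_real_derivative f y) (at y within {-1..1})"
      if "y \<in> {-1..1}" for y
      using primitive_has_real_derivative[OF G0_continuous_on[OF f] that] .
    have "(primitive f has_real_derivative f x) (at x within {0..1})"
      by (rule DERIV_subset[OF derivative]) (use x in auto)
    moreover have "((\<lambda>x. primitive f (-x)) has_real_derivative f (-x) * -1) (at x within {0..1})"
    proof -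
      have "(primitive f has_real_derivative f (-x)) (at (-x) within uminus ` {0..1})"
        by (rule DERIV_subset[OF derivative]) (use x in auto)
      from DERIV_image_chain[OF this DERIV_minus[OF DERIV_ident]] show ?thesis
        by (simp add: o_def)
    qed
    ultimately show "((\<lambda>x. primitive f x - primitive f (-x)) has_real_derivative f x + f (-x))
        (at x within {0..1})"
      by (auto intro!: derivative_eq_intros)
    show "((\<lambda>x. primitive f x - primitive f (-x)) has_real_derivative 0) (at x within {0..1})"
      by (rule has_field_derivative_transform_within[OF DERIV_const zero_less_one x])
        (simp add: symmetric)
  qed (use x in auto)
  have "\<forall>t\<in>{-1..1}. f (-t) = - f t"
  proof
    fix t :: real
    assume "t \<in> {-1..1}"
    then show "f (-t) = - f t"
      using sum_zero[of t] sum_zero[of "-t"] by (cases "t \<ge> 0") auto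
  qed
  with assms show False
    by (simp add: G00_def G0_def)
qed

theorem theorem4p2:
  fixes f :: "real \<Rightarrow> real"
  assumes "f \<in> G0" and "\<not> is_id f"
  shows "(\<exists>g1\<in>G0. \<exists>g2\<in>G0. Q f g1 > 0 \<and> 0 > Q f g2)
       \<and> (f \<notin> G00 \<longrightarrow> (\<exists>g1\<in>G00. \<exists>g2\<in>G00. Q f g1 > 0 \<and> 0 > Q f g2))"
proof (intro conjI impI)
  obtain p q where pq: "-1 < p" "p < q" "q < 1" and rate: "Q_rate f p q \<noteq> 0"
    using exists_Q_rate_nonzero[OF assms] by blast
  show "\<exists>g1\<in>G0. \<exists>g2\<in>G0. Q f g1 > 0 \<and> 0 > Q f g2"
    using Q_tilt_of_both_signs[OF assms(1) pq rate tilt_in_G0[OF pq]] .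
next
  assume "f \<notin> G00"
  then obtain q where q: "0 < q" "q < 1" and asymmetric: "primitive f q \<noteq> primitive f (-q)"
    using exists_primitive_asymmetric[OF assms(1)] by blast
  then have "-1 < -q" "-q < q" and rate: "Q_rate f (-q) q \<noteq> 0"
    by (auto simp: Q_rate_def divide_simps)
  then show "\<exists>g1\<in>G00. \<exists>g2\<in>G00. Q f g1 > 0 \<and> 0 > Q f g2"
    using Q_tilt_of_both_signs[OF assms(1) _ _ q(2) rate tilt_in_G00[OF q]] by blast
qed

end
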